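(* Fix integers $n\ge k\ge 1$, put $m=n-k$, and fix a partition $\lambda=(\lambda_1\ge\lambda_2\ge\cdots\ge\lambda_k\ge 0)$ with $\lambda_1\le m$. There is a bijection $\Phi$ from the set of Condensed Catalan tableaux of size $(k,n)$ and shape $\lambda$ to the set of weighted Catalan paths constrained by $\lambda$ which is weight-preserving in the sense that, for every such tableau $T$, the product of all symbols $\alpha,\beta$ in the filling of $T$ equals the weight of the path $\Phi(T)$. (Equivalently, $\mathrm{wt}(T)=\alpha^{k}\beta^{n-k}\cdot \mathrm{wt}(\Phi(T))$.)
   Context: The Young diagram of $\lambda$ (English convention) consists of boxes $(r,c)$ with $1\le r\le k$, $1\le c\le\lambda_r$; row $1$ is the top row and column $1$ the leftmost. A Condensed Catalan tableau of size $(k,n)$ and shape $\lambda$ is an assignment to each box of $\lambda$ of one of: $\alpha$, $\beta$, or empty, such that: (ii) if box $(r,c)$ contains $\beta$, every box $(r,c')$ with $c'<c$ is empty; (iii) if box $(r,c)$ contains $\alpha$, every box $(r',c)$ with $r'<r$ is empty; (iv) every box $(r,c)$ such that there is no $\alpha$ in any box $(r',c)$ with $r'>r$ and no $\beta$ in any box $(r,c')$ with $c'>c$ contains $\alpha$ or $\beta$. Its weight is $\mathrm{wt}(T)=\alpha^{k+a}\beta^{n-k+b}$, where $a$ and $b$ are the numbers of $\alpha$'s and $\beta$'s in the filling. Place $\lambda$ in the rectangle $[0,m]\times[0,k]$ of the plane, box $(r,c)$ occupying $[c-1,c]\times[k-r,k-r+1]$, and let $L$ be the lattice path from $(m,k)$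 to $(0,0)$ with unit south and west steps following the southeast boundary of $\lambda$ (so, with $\lambda_0:=m$ and $\lambda_{k+1}:=0$, the horizontal part of $L$ at height $y=k-i$ is the segment from $x=\lambda_{i+1}$ to $x=\lambda_i$, $0\le i\le k$). A Catalan path constrained by $\lambda$ is a lattice path from $(m,k)$ to $(0,0)$ with unit south and west steps that never crosses $L$; equivalently, it is determined by integers $C_1\ge C_2\ge\cdots\ge C_k\ge 0$ with $C_i\le\lambda_i$ for all $i$, where the unique south step crossing row $i$ (from height $k-i+1$ to $k-i$) is at $x=C_i$. Each step receives a label: a south step with $x>0$ (not on the west boundary of $\lambda$) gets $\beta$; a south step with $x=0$ gets $1$; a west step lying strictly above $L$ gets $\alpha$; a west step lying on $L$ gets $1$. The weight of the (weighted Catalan) path is the product of the labels of its steps. *)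

theory Defs
  imports Main
begin

datatype cell = Alpha | Beta | Empty

text \<open>A monomial alpha^a beta^b is represented by its exponent pair (a, b).\<close>
type_synonym monomial = "nat \<times> nat"

definition boxes :: "nat \<Rightarrow> (nat \<Rightarrow> nat) \<Rightarrow> (nat \<times> nat) set" where
  "boxes k lam = {(r, c). 1 \<le> r \<and> r \<le> k \<and> 1 \<le> c \<and> c \<le> lam r}"

definition is_partition :: "nat \<Rightarrow> nat \<Rightarrow> (nat \<Rightarrow> nat) \<Rightarrow> bool" where
  "is_partition k m lam \<longleftrightarrow>
     (\<forall>i j. 1 \<le> i \<longrightarrow> i \<le> j \<longrightarrow> j \<le> k \<longrightarrow> lam j \<le> lam i) \<and> lam 1 \<le> m"

definition is_cct :: "nat \<Rightarrow> (nat \<Rightarrow> nat) \<Rightarrow> (nat \<times> nat \<Rightarrow> cell) \<Rightarrow> bool" where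
  "is_cct k lam T \<longleftrightarrow>
     (\<forall>p. p \<notin> boxes k lam \<longrightarrow> T p = Empty) \<and>
     (\<forall>r c. (r, c) \<in> boxes k lam \<longrightarrow> T (r, c) = Beta \<longrightarrow>
        (\<forall>c'. 1 \<le> c' \<and> c' < c \<longrightarrow> T (r, c') = Empty)) \<and>
     (\<forall>r c. (r, c) \<in> boxes k lam \<longrightarrow> T (r, c) = Alpha \<longrightarrow>
        (\<forall>r'. 1 \<le> r' \<and> r' < r \<longrightarrow> T (r', c) = Empty)) \<and>
     (\<forall>r c. (r, c) \<in> boxes k lam \<longrightarrow>
        (\<forall>r'. r' > r \<and> (r', c) \<in> boxes k lam \<longrightarrow> T (r', c) \<noteq> Alpha) \<longrightarrow>
        (\<forall>c'. c' > c \<and> (r, c') \<in> boxes k lam \<longrightarrow> T (r, c') \<noteq> Beta) \<longrightarrow>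
        T (r, c) \<noteq> Empty)"

definition num_alpha :: "nat \<Rightarrow> (nat \<Rightarrow> nat) \<Rightarrow> (nat \<times> nat \<Rightarrow> cell) \<Rightarrow> nat" where
  "num_alpha k lam T = card {p \<in> boxes k lam. T p = Alpha}"

definition num_beta :: "nat \<Rightarrow> (nat \<Rightarrow> nat) \<Rightarrow> (nat \<times> nat \<Rightarrow> cell) \<Rightarrow> nat" where
  "num_beta k lam T = card {p \<in> boxes k lam. T p = Beta}"

definition symbol_product :: "nat \<Rightarrow> (nat \<Rightarrow> nat) \<Rightarrow> (nat \<times> nat \<Rightarrow> cell) \<Rightarrow> monomial" where
  "symbol_product k lam T = (num_alpha k lam T, num_beta k lam T)"

definition tableau_wt :: "nat \<Rightarrow> nat \<Rightarrow> (nat \<Rightarrow> nat) \<Rightarrow> (nat \<times> nat \<Rightarrow> cell) \<Rightarrow> monomial" where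
  "tableau_wt n k lam T = (k + num_alpha k lam T, (n - k) + num_beta k lam T)"

text \<open>Catalan path constrained by lam, encoded by C_1 \<ge> ... \<ge> C_k \<ge> 0, C_i \<le> lam_i;
  C is 0 outside 1..k (canonical representative).\<close>
definition is_cpath :: "nat \<Rightarrow> (nat \<Rightarrow> nat) \<Rightarrow> (nat \<Rightarrow> nat) \<Rightarrow> bool" where
  "is_cpath k lam C \<longleftrightarrow>
     (\<forall>i. (i < 1 \<or> k < i) \<longrightarrow> C i = 0) \<and>
     (\<forall>i j. 1 \<le> i \<longrightarrow> i \<le> j \<longrightarrow> j \<le> k \<longrightarrow> C j \<le> C i) \<and>
     (\<forall>i. 1 \<le> i \<and> i \<le> k \<longrightarrow> C i \<le> lam i)"

definition ext :: "nat \<Rightarrow> nat \<Rightarrow> (nat \<Rightarrow> nat) \<Rightarrow> nat \<Rightarrow> nat" where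
  "ext k m f i = (if i = 0 then m else if i \<le> k then f i else 0)"

text \<open>South steps: the one crossing row i (1 \<le> i \<le> k) is at x = C_i; label beta iff x > 0.\<close>
definition path_beta :: "nat \<Rightarrow> (nat \<Rightarrow> nat) \<Rightarrow> nat" where
  "path_beta k C = card {i. 1 \<le> i \<and> i \<le> k \<and> C i > 0}"

text \<open>West steps: at height k - i (0 \<le> i \<le> k) the path has west steps [x-1,x] for
  C_(i+1) < x \<le> C_i.  Such a step lies on L iff it lies in the horizontal part of L at
  that height, i.e. lam_(i+1) < x \<le> lam_i (i.e. [x-1,x] \<subseteq> [lam_(i+1), lam_i]);
  otherwise it lies strictly above L and is labelled alpha.\<close>
definition west_steps :: "nat \<Rightarrow> nat \<Rightarrow> (nat \<Rightarrow> nat) \<Rightarrow> (nat \<times> nat) set" where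
  "west_steps k m C = {(i, x). i \<le> k \<and> ext k m C (Suc i) < x \<and> x \<le> ext k m C i}"

definition path_alpha :: "nat \<Rightarrow> nat \<Rightarrow> (nat \<Rightarrow> nat) \<Rightarrow> (nat \<Rightarrow> nat) \<Rightarrow> nat" where
  "path_alpha k m lam C = card {(i, x) \<in> west_steps k m C.
      \<not> (ext k m lam (Suc i) < x \<and> x \<le> ext k m lam i)}"

definition path_wt :: "nat \<Rightarrow> nat \<Rightarrow> (nat \<Rightarrow> nat) \<Rightarrow> (nat \<Rightarrow> nat) \<Rightarrow> monomial" where
  "path_wt k m lam C = (path_alpha k m lam C, path_beta k C)"

end

theory Submission
  imports Defs
begin

text \<open>
  Read a condensed Catalan tableau from its last column. There the rows reaching that column
  carry betas in a bottom segment, one alpha in the row just above it (if any row is left), and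
  are empty otherwise; deleting the column together with the rows of these betas leaves a
  tableau on fewer rows, and every such extension of a tableau is again one. Hence a tableau is
  determined by the numbers E x of betas in columns x, x + 1, \<dots>, and these are exactly the weakly
  decreasing sequences bounded by the column lengths of \<open>\<lambda>\<close>. Column x contains an alpha iff
  E x is smaller than the length of column x.

  The path is the conjugate partition C of E, i.e. C i is the column of the i-th beta from the
  right. Its south steps off the west boundary are the betas, and its west step in column x lies at
  height k - E x, which is strictly above L iff column x contains an alpha.
\<close>

section \<open>Tableaux on arbitrary sets of rows\<close>

definition tableau_boxes :: "nat set \<Rightarrow> (nat \<Rightarrow> nat) \<Rightarrow> nat \<Rightarrow> (nat \<times> nat) set" where
  "tableau_boxes R lam w = {(r, c). r \<in> R \<and> 1 \<le> c \<and> c \<le> lam r \<and> c \<le> w}"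

text \<open>Condensed Catalan tableaux on an arbitrary set R of rows, cut off after column w. Rows
  keep their indices when others are deleted, so the rows below a box are those with larger index.\<close>

definition is_tableau :: "nat set \<Rightarrow> (nat \<Rightarrow> nat) \<Rightarrow> nat \<Rightarrow> (nat \<times> nat \<Rightarrow> cell) \<Rightarrow> bool" where
  "is_tableau R lam w T \<longleftrightarrow>
     (\<forall>p. p \<notin> tableau_boxes R lam w \<longrightarrow> T p = Empty) \<and>
     (\<forall>r c c'. (r, c) \<in> tableau_boxes R lam w \<longrightarrow> T (r, c) = Beta \<longrightarrow> c' < c \<longrightarrow> T (r, c') = Empty) \<and>
     (\<forall>r c r'. (r, c) \<in> tableau_boxes R lam w \<longrightarrow> T (r, c) = Alpha \<longrightarrow> r' < r \<longrightarrow> T (r', c) = Empty) \<and>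
     (\<forall>r c. (r, c) \<in> tableau_boxes R lam w \<longrightarrow> (\<forall>r'>r. T (r', c) \<noteq> Alpha) \<longrightarrow>
        (\<forall>c'>c. T (r, c') \<noteq> Beta) \<longrightarrow> T (r, c) \<noteq> Empty)"

lemma finite_tableau_boxes: "finite R \<Longrightarrow> finite (tableau_boxes R lam w)"
  by (rule finite_subset[of _ "R \<times> {0..w}"]) (auto simp: tableau_boxes_def)

lemma is_tableauD:
  assumes "is_tableau R lam w T"
  shows is_tableau_outside: "\<And>p. p \<notin> tableau_boxes R lam w \<Longrightarrow> T p = Empty"
    and is_tableau_Beta: "\<And>r c c'. (r, c) \<in> tableau_boxes R lam w \<Longrightarrow> T (r, c) = Beta \<Longrightarrow>
          c' < c \<Longrightarrow> T (r, c') = Empty"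
    and is_tableau_Alpha: "\<And>r c r'. (r, c) \<in> tableau_boxes R lam w \<Longrightarrow> T (r, c) = Alpha \<Longrightarrow>
          r' < r \<Longrightarrow> T (r', c) = Empty"
    and is_tableau_nonEmpty: "\<And>r c. (r, c) \<in> tableau_boxes R lam w \<Longrightarrow> \<forall>r'>r. T (r', c) \<noteq> Alpha \<Longrightarrow>
          \<forall>c'>c. T (r, c') \<noteq> Beta \<Longrightarrow> T (r, c) \<noteq> Empty"
  using assms unfolding is_tableau_def by blast+

lemma is_tableau_in_boxes: "is_tableau R lam w T \<Longrightarrow> T p \<noteq> Empty \<Longrightarrow> p \<in> tableau_boxes R lam w"
  using is_tableau_outside by blast

lemma is_tableau_Empty_beyond: "is_tableau R lam v T \<Longrightarrow> v < c \<or> r \<notin> R \<Longrightarrow> T (r, c) = Empty"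
  using is_tableau_outside by (auto simp: tableau_boxes_def)

lemma is_cct_iff_is_tableau:
  assumes "\<forall>r\<in>{1..k}. lam r \<le> m"
  shows "is_cct k lam T \<longleftrightarrow> is_tableau {1..k} lam m T"
proof -
  have boxes: "boxes k lam = tableau_boxes {1..k} lam m"
    using assms by (auto simp: boxes_def tableau_boxes_def intro: order_trans)
  have "(r, 0) \<notin> boxes k lam" "(0, c) \<notin> boxes k lam" for r c
    by (auto simp: boxes_def)
  then show ?thesis
    unfolding is_cct_def is_tableau_def boxes[symmetric]
    by safe (metis cell.distinct less_one not_le)+
qed

section \<open>The last column\<close>

definition column_rows :: "nat set \<Rightarrow> (nat \<Rightarrow> nat) \<Rightarrow> nat \<Rightarrow> nat set" where
  "column_rows R lam c = {r \<in> R. c \<le> lam r}"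

definition is_upper_subset :: "nat set \<Rightarrow> nat set \<Rightarrow> bool" where
  "is_upper_subset S U \<longleftrightarrow> U \<subseteq> S \<and> (\<forall>r\<in>U. \<forall>r'\<in>S. r < r' \<longrightarrow> r' \<in> U)"

lemma is_upper_subset_card_less:
  assumes S: "finite S" and U1: "is_upper_subset S U1" and U2: "is_upper_subset S U2"
    and r: "r \<in> U1" "r \<notin> U2"
  shows "card U2 < card U1"
proof -
  have "U2 \<subseteq> U1 - {r}"
  proof
    fix r' assume r': "r' \<in> U2"
    have "r \<in> S" "r' \<in> S" using r r' U1 U2 by (auto simp: is_upper_subset_def)
    then have "r < r'" using r r' U2 unfolding is_upper_subset_def by (metis linorder_neqE_nat)
    then show "r' \<in> U1 - {r}" using r U1 \<open>r' \<in> S\<close> by (auto simp: is_upper_subset_def)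
  qed
  moreover have "finite U1" using S U1 by (auto simp: is_upper_subset_def intro: finite_subset)
  ultimately show ?thesis using r(1) by (meson card_Diff1_less card_mono finite_Diff order_le_less_trans)
qed

lemma is_upper_subset_card_eq:
  assumes "finite S" "is_upper_subset S U1" "is_upper_subset S U2" "card U1 = card U2"
  shows "U1 = U2"
  using is_upper_subset_card_less[OF assms(1,2,3)] is_upper_subset_card_less[OF assms(1,3,2)] assms(4)
  by (metis less_irrefl subsetI subset_antisym)

lemma ex_is_upper_subset_card:
  assumes S: "finite S" and j: "j \<le> card S"
  shows "\<exists>U. is_upper_subset S U \<and> card U = j"
  using j
proof (induction j)
  case 0
  show ?case by (rule exI[of _ "{}"]) (simp add: is_upper_subset_def)
next
  case (Suc j)
  then obtain U where U: "is_upper_subset S U" "card U = j" by auto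
  have US: "U \<subseteq> S" using U by (simp add: is_upper_subset_def)
  then have "S - U \<noteq> {}" using U Suc.prems by auto
  then have a: "Max (S - U) \<in> S - U" and a_max: "\<And>r. r \<in> S - U \<Longrightarrow> r \<le> Max (S - U)"
    using S Max_in by auto
  have "is_upper_subset S (insert (Max (S - U)) U)"
    using U a a_max unfolding is_upper_subset_def by (auto simp: not_le[symmetric])
  moreover have "card (insert (Max (S - U)) U) = Suc j"
    using a U S US by (simp add: finite_subset)
  ultimately show ?case by blast
qed

text \<open>The last column of a tableau (see is_tableau_last_column): S are the rows reaching
  column w, U the rows of its betas.\<close>

definition add_column ::
  "nat \<Rightarrow> nat set \<Rightarrow> nat set \<Rightarrow> (nat \<times> nat \<Rightarrow> cell) \<Rightarrow> nat \<times> nat \<Rightarrow> cell" where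
  "add_column w S U T = (\<lambda>(r, c). if c = w \<and> r \<in> S then
      (if r \<in> U then Beta else if r = Max (S - U) then Alpha else Empty) else T (r, c))"

lemma finite_column_rows: "finite R \<Longrightarrow> finite (column_rows R lam c)"
  by (simp add: column_rows_def)

lemma in_tableau_boxes_Suc:
  "(r, Suc v) \<in> tableau_boxes R lam (Suc v) \<longleftrightarrow> r \<in> column_rows R lam (Suc v)"
  by (auto simp: tableau_boxes_def column_rows_def)

lemma is_tableau_last_column_Empty_iff:
  assumes T: "is_tableau R lam w T" and r: "(r, w) \<in> tableau_boxes R lam w"
  shows "T (r, w) = Empty \<longleftrightarrow> (\<exists>r'>r. T (r', w) = Alpha)"
proof
  have "T (r, c') \<noteq> Beta" if "c' > w" for c'
    using is_tableau_in_boxes[OF T, of "(r, c')"] that by (auto simp: tableau_boxes_def)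
  then show "T (r, w) = Empty \<Longrightarrow> \<exists>r'>r. T (r', w) = Alpha"
    using is_tableau_nonEmpty[OF T r] by blast
next
  assume "\<exists>r'>r. T (r', w) = Alpha"
  then obtain r' where "r < r'" "T (r', w) = Alpha" by blast
  then show "T (r, w) = Empty"
    using is_tableau_Alpha[OF T] is_tableau_in_boxes[OF T, of "(r', w)"] by simp
qed

lemma is_tableau_last_column:
  assumes T: "is_tableau R lam (Suc v) T" and R: "finite R"
  defines "S \<equiv> column_rows R lam (Suc v)"
    and "U \<equiv> {r \<in> column_rows R lam (Suc v). T (r, Suc v) = Beta}"
  shows "is_upper_subset S U"
    and "\<And>r. r \<in> S \<Longrightarrow> T (r, Suc v) =
           (if r \<in> U then Beta else if r = Max (S - U) then Alpha else Empty)"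
proof -
  have U: "r \<in> U \<longleftrightarrow> r \<in> S \<and> T (r, Suc v) = Beta" for r
    by (simp add: S_def U_def)
  have Empty_iff: "T (r, Suc v) = Empty \<longleftrightarrow> (\<exists>r'>r. T (r', Suc v) = Alpha)" if "r \<in> S" for r
    using is_tableau_last_column_Empty_iff[OF T] that by (simp add: S_def in_tableau_boxes_Suc)
  have Alpha_in: "r \<in> S - U" if "T (r, Suc v) = Alpha" for r
    using is_tableau_in_boxes[OF T, of "(r, Suc v)"] that U
    by (simp add: S_def in_tableau_boxes_Suc)
  show "is_upper_subset S U"
    unfolding is_upper_subset_def
  proof (intro conjI ballI impI)
    fix r r' assume "r \<in> U" "r' \<in> S" "r < r'"
    then have "\<not> (\<exists>r''>r. T (r'', Suc v) = Alpha)" using Empty_iff[of r] U by simp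
    then have "T (r', Suc v) \<noteq> Alpha" "T (r', Suc v) \<noteq> Empty"
      using Empty_iff[OF \<open>r' \<in> S\<close>] \<open>r < r'\<close> by (auto dest: order.strict_trans)
    then show "r' \<in> U" using U \<open>r' \<in> S\<close> by (cases "T (r', Suc v)") auto
  qed (use U in blast)
  fix r assume r: "r \<in> S"
  show "T (r, Suc v) = (if r \<in> U then Beta else if r = Max (S - U) then Alpha else Empty)"
  proof (cases "r \<in> U")
    case False
    define a where "a = Max (S - U)"
    have fin: "finite (S - U)" using R by (simp add: S_def finite_column_rows)
    have a: "a \<in> S - U" and r_le: "r \<le> a"
      using False r fin Max_in[OF fin] by (auto simp: a_def)
    have "T (a, Suc v) \<noteq> Empty"
      using Empty_iff[of a] a Alpha_in Max_ge[OF fin] by (force simp: a_def)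
    then have "T (a, Suc v) = Alpha" using a U by (cases "T (a, Suc v)") auto
    moreover have "T (r, Suc v) = Empty" if "r < a"
      using Empty_iff[OF r] that \<open>T (a, Suc v) = Alpha\<close> by blast
    ultimately show ?thesis using False r_le by (auto simp: a_def)
  qed (use U in simp)
qed

lemma is_tableau_restrict:
  assumes T: "is_tableau R lam (Suc v) T"
  defines "U \<equiv> {r \<in> column_rows R lam (Suc v). T (r, Suc v) = Beta}"
  shows "is_tableau (R - U) lam v (\<lambda>(r, c). if c \<le> v then T (r, c) else Empty)"
    (is "is_tableau _ _ _ ?T'")
proof -
  have boxes: "tableau_boxes (R - U) lam v \<subseteq> tableau_boxes R lam (Suc v)"
    by (auto simp: tableau_boxes_def)
  have Beta_right: "r \<in> U" if "T (r, c) = Beta" "v < c" for r c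
    using is_tableau_in_boxes[OF T, of "(r, c)"] that
    by (cases "c = Suc v") (auto simp: U_def column_rows_def tableau_boxes_def)
  show ?thesis
    unfolding is_tableau_def
  proof (intro conjI allI impI)
    fix p assume p: "p \<notin> tableau_boxes (R - U) lam v"
    obtain r c where [simp]: "p = (r, c)" by fastforce
    show "?T' p = Empty"
    proof (cases "c \<le> v \<and> T (r, c) \<noteq> Empty")
      case True
      then have "r \<in> U" using p is_tableau_in_boxes[OF T, of p] by (auto simp: tableau_boxes_def)
      then show ?thesis using True is_tableau_Beta[OF T, of r "Suc v" c]
        by (simp add: U_def in_tableau_boxes_Suc)
    qed auto
  next
    fix r c c' assume "(r, c) \<in> tableau_boxes (R - U) lam v" "?T' (r, c) = Beta" "c' < c"
    then show "?T' (r, c') = Empty"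
      using boxes is_tableau_Beta[OF T, of r c c'] by (auto simp: tableau_boxes_def)
  next
    fix r c r' assume "(r, c) \<in> tableau_boxes (R - U) lam v" "?T' (r, c) = Alpha" "r' < r"
    then show "?T' (r', c) = Empty"
      using boxes is_tableau_Alpha[OF T, of r c r'] by (auto simp: tableau_boxes_def)
  next
    fix r c assume rc: "(r, c) \<in> tableau_boxes (R - U) lam v"
      and "\<forall>r'>r. ?T' (r', c) \<noteq> Alpha" "\<forall>c'>c. ?T' (r, c') \<noteq> Beta"
    moreover have "c \<le> v" "r \<notin> U" using rc by (auto simp: tableau_boxes_def)
    ultimately have "\<forall>r'>r. T (r', c) \<noteq> Alpha" "\<forall>c'>c. T (r, c') \<noteq> Beta"
      using Beta_right by (auto split: if_splits)
    then show "?T' (r, c) \<noteq> Empty"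
      using is_tableau_nonEmpty[OF T] rc boxes \<open>c \<le> v\<close> by auto
  qed
qed

lemma add_column_other: "c \<noteq> w \<Longrightarrow> add_column w S U T (r, c) = T (r, c)"
  by (simp add: add_column_def)

lemma add_column_last:
  "add_column w S U T (r, w) =
     (if r \<in> S then (if r \<in> U then Beta else if r = Max (S - U) then Alpha else Empty) else T (r, w))"
  by (simp add: add_column_def)

lemma add_column_nonEmpty:
  assumes R: "finite R" and T': "is_tableau (R - U) lam v T'"
    and U: "is_upper_subset (column_rows R lam (Suc v)) U"
    and rc: "(r, c) \<in> tableau_boxes R lam (Suc v)"
  defines "T \<equiv> add_column (Suc v) (column_rows R lam (Suc v)) U T'"
  assumes no_Alpha: "\<forall>r'>r. T (r', c) \<noteq> Alpha" and no_Beta: "\<forall>c'>c. T (r, c') \<noteq> Beta"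
  shows "T (r, c) \<noteq> Empty"
proof -
  let ?S = "column_rows R lam (Suc v)"
  have US: "U \<subseteq> ?S" using U by (simp add: is_upper_subset_def)
  have new: "T (r', Suc v) = (if r' \<in> U then Beta else if r' \<in> ?S \<and> r' = Max (?S - U) then Alpha else Empty)"
    for r' using add_column_last US is_tableau_Empty_beyond[OF T'] by (auto simp: T_def)
  show ?thesis
  proof (cases "c = Suc v")
    case True
    then have r: "r \<in> ?S" using rc in_tableau_boxes_Suc by blast
    show ?thesis
    proof (cases "r \<in> U \<or> r = Max (?S - U)")
      case False
      then have "r < Max (?S - U)" "Max (?S - U) \<in> ?S - U"
        using r R Max_in[of "?S - U"] by (auto simp: finite_column_rows order_less_le)
      then show ?thesis using no_Alpha new True by auto
    qed (use True new r in auto)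
  next
    case False
    then have "c \<le> v" using rc by (auto simp: tableau_boxes_def)
    then have "r \<notin> U" using no_Beta new[of r] by auto
    with \<open>c \<le> v\<close> have "(r, c) \<in> tableau_boxes (R - U) lam v"
      using rc by (auto simp: tableau_boxes_def)
    moreover have "\<forall>r'>r. T' (r', c) \<noteq> Alpha" using no_Alpha add_column_other[OF False] by (simp add: T_def)
    moreover have "T' (r, c') \<noteq> Beta" if "c < c'" for c'
      using no_Beta that add_column_other[of c' "Suc v"] is_tableau_Empty_beyond[OF T', of "Suc v" r]
      by (cases "c' = Suc v") (auto simp: T_def)
    ultimately show ?thesis
      using is_tableau_nonEmpty[OF T'] add_column_other[OF False] by (simp add: T_def)
  qed
qed

lemma is_tableau_add_column:
  assumes R: "finite R" and T': "is_tableau (R - U) lam v T'"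
    and U: "is_upper_subset (column_rows R lam (Suc v)) U"
  shows "is_tableau R lam (Suc v) (add_column (Suc v) (column_rows R lam (Suc v)) U T')"
    (is "is_tableau _ _ _ ?T")
proof -
  let ?S = "column_rows R lam (Suc v)"
  have US: "U \<subseteq> ?S" using U by (simp add: is_upper_subset_def)
  have boxes: "tableau_boxes (R - U) lam v \<subseteq> tableau_boxes R lam (Suc v)"
    by (auto simp: tableau_boxes_def)
  have old: "?T (r, c) = T' (r, c)" if "c \<noteq> Suc v" for r c
    using add_column_other[OF that] .
  have new: "?T (r, Suc v) = (if r \<in> U then Beta else if r \<in> ?S \<and> r = Max (?S - U) then Alpha else Empty)"
    for r using add_column_last US is_tableau_Empty_beyond[OF T'] by auto
  have old_in_boxes: "(r, c) \<in> tableau_boxes (R - U) lam v" if "c \<noteq> Suc v" "?T (r, c) \<noteq> Empty" for r c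
    using that old is_tableau_in_boxes[OF T', of "(r, c)"] by simp
  show ?thesis
    unfolding is_tableau_def
  proof (intro conjI allI impI)
    fix p assume "p \<notin> tableau_boxes R lam (Suc v)"
    then show "?T p = Empty"
      using boxes is_tableau_outside[OF T', of p] US
      by (cases p) (auto simp: add_column_def in_tableau_boxes_Suc[symmetric])
  next
    fix r c c' assume rc: "(r, c) \<in> tableau_boxes R lam (Suc v)" "?T (r, c) = Beta" "c' < c"
    show "?T (r, c') = Empty"
    proof (cases "c = Suc v")
      case True
      then have "r \<in> U" using rc new[of r] by (auto split: if_splits)
      then show ?thesis using True rc(3) old[of c' r] is_tableau_Empty_beyond[OF T', of c' r] by simp
    next
      case False
      then have "(r, c) \<in> tableau_boxes (R - U) lam v" using rc old_in_boxes by simp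
      then show ?thesis
        using rc old[of c' r] old[OF False] is_tableau_Beta[OF T'] by (auto simp: tableau_boxes_def)
    qed
  next
    fix r c r' assume rc: "(r, c) \<in> tableau_boxes R lam (Suc v)" "?T (r, c) = Alpha" "r' < r"
    show "?T (r', c) = Empty"
    proof (cases "c = Suc v")
      case True
      then have "r \<in> ?S - U" "r = Max (?S - U)" using rc new[of r] by (auto split: if_splits)
      then have "r' \<notin> U" using U \<open>r' < r\<close> by (auto simp: is_upper_subset_def)
      then show ?thesis using True new[of r'] \<open>r' < r\<close> \<open>r = Max (?S - U)\<close> by simp
    next
      case False
      then have "(r, c) \<in> tableau_boxes (R - U) lam v" using rc old_in_boxes by simp
      then show ?thesis using rc old[OF False] is_tableau_Alpha[OF T'] by simp
    qed
  qed (rule add_column_nonEmpty[OF R T' U])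
qed

lemma is_tableau_SucE:
  assumes R: "finite R" and T: "is_tableau R lam (Suc v) T"
  obtains U T' where "is_upper_subset (column_rows R lam (Suc v)) U"
    and "is_tableau (R - U) lam v T'" and "T = add_column (Suc v) (column_rows R lam (Suc v)) U T'"
proof
  let ?S = "column_rows R lam (Suc v)"
  let ?U = "{r \<in> ?S. T (r, Suc v) = Beta}"
  let ?T' = "\<lambda>(r, c). if c \<le> v then T (r, c) else Empty"
  show "is_upper_subset ?S ?U" by (rule is_tableau_last_column(1)[OF T R])
  show "is_tableau (R - ?U) lam v ?T'" by (rule is_tableau_restrict[OF T])
  show "T = add_column (Suc v) ?S ?U ?T'"
  proof (intro ext, clarify)
    fix r c
    show "T (r, c) = add_column (Suc v) ?S ?U ?T' (r, c)"
    proof (cases "c = Suc v \<and> r \<in> ?S")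
      case False
      then have "T (r, c) = Empty" if "v < c"
        using is_tableau_outside[OF T, of "(r, c)"] that
        by (auto simp: tableau_boxes_def column_rows_def)
      then show ?thesis using False by (auto simp: add_column_def)
    qed (use is_tableau_last_column(2)[OF T R] in \<open>auto simp: add_column_def\<close>)
  qed
qed

section \<open>Beta profiles\<close>

definition betas_from :: "(nat \<times> nat \<Rightarrow> cell) \<Rightarrow> nat \<Rightarrow> (nat \<times> nat) set" where
  "betas_from T x = {(r, c). x \<le> c \<and> T (r, c) = Beta}"

definition alphas :: "(nat \<times> nat \<Rightarrow> cell) \<Rightarrow> (nat \<times> nat) set" where
  "alphas T = {p. T p = Alpha}"

lemma finite_betas_from:
  assumes "finite R" "is_tableau R lam w T" shows "finite (betas_from T x)"
  by (rule finite_subset[OF _ finite_tableau_boxes[OF assms(1)]])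
    (use is_tableau_in_boxes[OF assms(2)] in \<open>force simp: betas_from_def\<close>)

lemma finite_alphas:
  assumes "finite R" "is_tableau R lam w T" shows "finite (alphas T)"
  by (rule finite_subset[OF _ finite_tableau_boxes[OF assms(1)]])
    (use is_tableau_in_boxes[OF assms(2)] in \<open>force simp: alphas_def\<close>)

lemma card_betas_from_add_column:
  assumes R: "finite R" and T': "is_tableau (R - U) lam v T'"
    and US: "U \<subseteq> column_rows R lam (Suc v)" and x: "x \<le> Suc v"
  defines "S \<equiv> column_rows R lam (Suc v)"
  shows "card (betas_from (add_column (Suc v) S U T') x) = card (betas_from T' x) + card U"
proof -
  have fin: "finite U" using R US by (metis finite_column_rows finite_subset)
  have "betas_from (add_column (Suc v) S U T') x = betas_from T' x \<union> (\<lambda>r. (r, Suc v)) ` U"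
    using x US[folded S_def] is_tableau_Empty_beyond[OF T', of "Suc v"]
    by (auto simp: betas_from_def add_column_def split: if_splits)
  moreover have "betas_from T' x \<inter> (\<lambda>r. (r, Suc v)) ` U = {}"
    using is_tableau_Empty_beyond[OF T'] by (auto simp: betas_from_def)
  ultimately show ?thesis
    using finite_betas_from[OF _ T', of x] R fin by (simp add: card_Un_disjoint card_image inj_on_def)
qed

lemma card_alphas_add_column:
  assumes R: "finite R" and T': "is_tableau (R - U) lam v T'"
    and US: "U \<subseteq> column_rows R lam (Suc v)"
  defines "S \<equiv> column_rows R lam (Suc v)"
  shows "card (alphas (add_column (Suc v) S U T')) =
           card (alphas T') + (if card U < card S then 1 else 0)"
proof -
  have S: "finite S" using R by (simp add: S_def finite_column_rows)
  have "alphas (add_column (Suc v) S U T') =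
      alphas T' \<union> (if S - U = {} then {} else {(Max (S - U), Suc v)})"
  proof (cases "S - U = {}")
    case False
    then have "Max (S - U) \<in> S - U" using Max_in S by blast
    with False show ?thesis
      using is_tableau_Empty_beyond[OF T', of "Suc v"]
      by (auto simp: alphas_def add_column_def split: if_splits)
  next
    case True
    then have "add_column (Suc v) S U T' p = Alpha \<longleftrightarrow> T' p = Alpha" for p
      using is_tableau_Empty_beyond[OF T', of "Suc v"] by (cases p) (auto simp: add_column_def)
    with True show ?thesis by (simp add: alphas_def)
  qed
  moreover have "(Max (S - U), Suc v) \<notin> alphas T'"
    using is_tableau_Empty_beyond[OF T'] by (simp add: alphas_def)
  moreover have "card U < card S \<longleftrightarrow> S - U \<noteq> {}"
  proof
    show "card U < card S \<Longrightarrow> S - U \<noteq> {}" using US[folded S_def] by auto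
    show "S - U \<noteq> {} \<Longrightarrow> card U < card S"
      using US[folded S_def] by (intro psubset_card_mono[OF S]) auto
  qed
  ultimately show ?thesis using finite_alphas[OF _ T'] R by auto
qed

definition beta_profile :: "nat \<Rightarrow> (nat \<times> nat \<Rightarrow> cell) \<Rightarrow> nat \<Rightarrow> nat" where
  "beta_profile w T x = (if x \<in> {1..w} then card (betas_from T x) else 0)"

definition profiles :: "nat set \<Rightarrow> (nat \<Rightarrow> nat) \<Rightarrow> nat \<Rightarrow> (nat \<Rightarrow> nat) set" where
  "profiles R lam w = {E. (\<forall>x. x \<notin> {1..w} \<longrightarrow> E x = 0) \<and> antimono_on {1..w} E \<and>
      (\<forall>x\<in>{1..w}. E x \<le> card (column_rows R lam x))}"

lemma beta_profile_add_column:
  assumes R: "finite R" and T': "is_tableau (R - U) lam v T'"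
    and US: "U \<subseteq> column_rows R lam (Suc v)"
  shows "beta_profile (Suc v) (add_column (Suc v) (column_rows R lam (Suc v)) U T') =
         (\<lambda>x. if x \<in> {1..Suc v} then beta_profile v T' x + card U else 0)"
proof
  fix x
  have "betas_from T' (Suc v) = {}"
    using is_tableau_Empty_beyond[OF T'] by (auto simp: betas_from_def)
  then show "beta_profile (Suc v) (add_column (Suc v) (column_rows R lam (Suc v)) U T') x =
      (if x \<in> {1..Suc v} then beta_profile v T' x + card U else 0)"
    using card_betas_from_add_column[OF R T' US, of x]
    by (cases "x = Suc v") (auto simp: beta_profile_def)
qed

lemma card_column_rows_Diff:
  assumes R: "finite R" and US: "U \<subseteq> column_rows R lam c" and x: "x \<le> c"
  shows "card (column_rows R lam x) = card (column_rows (R - U) lam x) + card U"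
proof -
  have "column_rows R lam x = column_rows (R - U) lam x \<union> U"
    using US x by (auto simp: column_rows_def)
  moreover have "column_rows (R - U) lam x \<inter> U = {}" by (auto simp: column_rows_def)
  moreover have "finite U" using R US by (metis finite_column_rows finite_subset)
  ultimately show ?thesis using R by (simp add: card_Un_disjoint finite_column_rows)
qed

lemma add_column_profile_in_profiles:
  assumes R: "finite R" and US: "U \<subseteq> column_rows R lam (Suc v)"
    and E: "E \<in> profiles (R - U) lam v"
  shows "(\<lambda>x. if x \<in> {1..Suc v} then E x + card U else 0) \<in> profiles R lam (Suc v)"
proof -
  have E_Suc: "E (Suc v) = 0" using E by (simp add: profiles_def)
  have "E y \<le> E x" if "x \<in> {1..Suc v}" "y \<in> {1..Suc v}" "x \<le> y" for x y
    using that E E_Suc by (cases "y = Suc v") (auto simp: profiles_def monotone_on_def)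
  moreover have "E x + card U \<le> card (column_rows R lam x)" if "x \<in> {1..Suc v}" for x
    using that E E_Suc card_column_rows_Diff[OF R US, of x]
    by (cases "x = Suc v") (auto simp: profiles_def)
  ultimately show ?thesis by (auto simp: profiles_def monotone_on_def)
qed

lemma drop_column_profile_in_profiles:
  assumes R: "finite R" and US: "U \<subseteq> column_rows R lam (Suc v)"
    and E: "E \<in> profiles R lam (Suc v)" and U: "card U = E (Suc v)"
  shows "(\<lambda>x. if x \<in> {1..v} then E x - card U else 0) \<in> profiles (R - U) lam v"
proof -
  have "E y \<le> E x" if "x \<in> {1..Suc v}" "y \<in> {1..Suc v}" "x \<le> y" for x y
    using E that by (auto simp: profiles_def monotone_on_def)
  moreover have "E x \<le> card (column_rows (R - U) lam x) + card U" if "x \<in> {1..v}" for x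
  proof -
    have "E x \<le> card (column_rows R lam x)" using E that by (simp add: profiles_def)
    then show ?thesis using that card_column_rows_Diff[OF R US, of x] by simp
  qed
  ultimately show ?thesis
    unfolding profiles_def monotone_on_def using U by (force intro: diff_le_mono)
qed

lemma is_tableau_0: "is_tableau R lam 0 T \<longleftrightarrow> T = (\<lambda>_. Empty)"
  by (auto simp: is_tableau_def tableau_boxes_def)

lemma beta_profile_in_profiles:
  "finite R \<Longrightarrow> is_tableau R lam w T \<Longrightarrow> beta_profile w T \<in> profiles R lam w"
proof (induction w arbitrary: R T)
  case 0
  show ?case by (simp add: beta_profile_def profiles_def)
next
  case (Suc v)
  obtain U T' where U: "is_upper_subset (column_rows R lam (Suc v)) U"
    and T': "is_tableau (R - U) lam v T'" and T: "T = add_column (Suc v) (column_rows R lam (Suc v)) U T'"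
    using is_tableau_SucE[OF Suc.prems] .
  have US: "U \<subseteq> column_rows R lam (Suc v)" using U by (simp add: is_upper_subset_def)
  show ?case
    using add_column_profile_in_profiles[OF Suc.prems(1) US Suc.IH[OF _ T']]
      beta_profile_add_column[OF Suc.prems(1) T' US] T Suc.prems(1) by simp
qed

lemma card_alphas_beta_profile:
  "finite R \<Longrightarrow> is_tableau R lam w T \<Longrightarrow>
     card (alphas T) = card {x \<in> {1..w}. beta_profile w T x < card (column_rows R lam x)}"
proof (induction w arbitrary: R T)
  case 0
  then show ?case by (simp add: is_tableau_0 alphas_def)
next
  case (Suc v)
  let ?S = "column_rows R lam (Suc v)"
  obtain U T' where U: "is_upper_subset ?S U"
    and T': "is_tableau (R - U) lam v T'" and T: "T = add_column (Suc v) ?S U T'"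
    using is_tableau_SucE[OF Suc.prems] .
  have US: "U \<subseteq> ?S" using U by (simp add: is_upper_subset_def)
  have "{x \<in> {1..Suc v}. beta_profile (Suc v) T x < card (column_rows R lam x)} =
      {x \<in> {1..v}. beta_profile v T' x < card (column_rows (R - U) lam x)} \<union>
      (if card U < card ?S then {Suc v} else {})"
    using beta_profile_add_column[OF Suc.prems(1) T' US] card_column_rows_Diff[OF Suc.prems(1) US]
    by (auto simp: T le_Suc_eq beta_profile_def)
  then show ?case
    using Suc.IH[OF _ T'] card_alphas_add_column[OF Suc.prems(1) T' US] Suc.prems(1) T by simp
qed

lemma beta_profile_inj:
  "finite R \<Longrightarrow> is_tableau R lam w T1 \<Longrightarrow> is_tableau R lam w T2 \<Longrightarrow>
     beta_profile w T1 = beta_profile w T2 \<Longrightarrow> T1 = T2"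
proof (induction w arbitrary: R T1 T2)
  case 0
  then show ?case by (simp add: is_tableau_0)
next
  case (Suc v)
  let ?S = "column_rows R lam (Suc v)"
  obtain U1 T1' where U1: "is_upper_subset ?S U1"
    and T1': "is_tableau (R - U1) lam v T1'" and T1: "T1 = add_column (Suc v) ?S U1 T1'"
    using is_tableau_SucE[OF Suc.prems(1,2)] .
  obtain U2 T2' where U2: "is_upper_subset ?S U2"
    and T2': "is_tableau (R - U2) lam v T2'" and T2: "T2 = add_column (Suc v) ?S U2 T2'"
    using is_tableau_SucE[OF Suc.prems(1,3)] .
  have US1: "U1 \<subseteq> ?S" and US2: "U2 \<subseteq> ?S" using U1 U2 by (simp_all add: is_upper_subset_def)
  note profile1 = beta_profile_add_column[OF Suc.prems(1) T1' US1, folded T1]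
  note profile2 = beta_profile_add_column[OF Suc.prems(1) T2' US2, folded T2]
  have "card U1 = card U2"
    using fun_cong[OF Suc.prems(4), of "Suc v"] by (simp add: profile1 profile2 beta_profile_def)
  then have "U1 = U2"
    using is_upper_subset_card_eq[OF _ U1 U2] Suc.prems(1) by (simp add: finite_column_rows)
  moreover have "beta_profile v T1' = beta_profile v T2'"
  proof
    fix x
    show "beta_profile v T1' x = beta_profile v T2' x"
      using fun_cong[OF Suc.prems(4), of x] \<open>U1 = U2\<close>
      by (cases "x \<in> {1..v}") (auto simp: profile1 profile2 beta_profile_def)
  qed
  ultimately show ?case using Suc.IH[OF _ T1'] T2' T1 T2 Suc.prems(1) by simp
qed

lemma beta_profile_surj:
  "finite R \<Longrightarrow> E \<in> profiles R lam w \<Longrightarrow> \<exists>T. is_tableau R lam w T \<and> beta_profile w T = E"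
proof (induction w arbitrary: R E)
  case 0
  then have "E = (\<lambda>_. 0)" by (auto simp: profiles_def)
  then show ?case by (auto simp: is_tableau_0 beta_profile_def)
next
  case (Suc v)
  let ?S = "column_rows R lam (Suc v)"
  have "E (Suc v) \<le> card ?S" using Suc.prems(2) by (simp add: profiles_def)
  then obtain U where U: "is_upper_subset ?S U" and card_U: "card U = E (Suc v)"
    using ex_is_upper_subset_card[OF finite_column_rows[OF Suc.prems(1)]] by blast
  have US: "U \<subseteq> ?S" using U by (simp add: is_upper_subset_def)
  obtain T' where T': "is_tableau (R - U) lam v T'"
    and profile': "beta_profile v T' = (\<lambda>x. if x \<in> {1..v} then E x - card U else 0)"
    using Suc.IH drop_column_profile_in_profiles[OF Suc.prems(1) US Suc.prems(2) card_U] Suc.prems(1)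
    by blast
  have "E (Suc v) \<le> E x" if "x \<in> {1..Suc v}" for x
    using Suc.prems(2) that by (auto simp: profiles_def monotone_on_def)
  moreover have "E x = 0" if "x \<notin> {1..Suc v}" for x
    using Suc.prems(2) that by (simp add: profiles_def)
  ultimately have "beta_profile (Suc v) (add_column (Suc v) ?S U T') = E"
    using card_U by (auto simp: beta_profile_add_column[OF Suc.prems(1) T' US] profile' le_Suc_eq)
  then show ?case using is_tableau_add_column[OF Suc.prems(1) T' U] by blast
qed

lemma bij_betw_beta_profile:
  assumes "finite R"
  shows "bij_betw (beta_profile w) {T. is_tableau R lam w T} (profiles R lam w)"
proof (rule bij_betw_imageI)
  show "inj_on (beta_profile w) {T. is_tableau R lam w T}"
    using beta_profile_inj[OF assms] by (auto intro!: inj_onI)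
  show "beta_profile w ` {T. is_tableau R lam w T} = profiles R lam w"
    using beta_profile_in_profiles[OF assms] beta_profile_surj[OF assms] by blast
qed

section \<open>Conjugate partitions\<close>

lemma antimono_on_superlevel_eq:
  fixes f :: "nat \<Rightarrow> 'a::order"
  assumes f: "antimono_on {1..k} f"
  shows "{i \<in> {1..k}. t \<le> f i} = {1..card {i \<in> {1..k}. t \<le> f i}}"
proof (cases "{i \<in> {1..k}. t \<le> f i} = {}")
  case False
  define M where "M = Max {i \<in> {1..k}. t \<le> f i}"
  have M: "M \<in> {i \<in> {1..k}. t \<le> f i}" unfolding M_def using False by (intro Max_in) auto
  have "{i \<in> {1..k}. t \<le> f i} = {1..M}"
  proof (intro equalityI subsetI)
    fix i assume i: "i \<in> {1..M}"
    then have "f M \<le> f i" using M f by (simp add: monotone_on_def)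
    then show "i \<in> {i \<in> {1..k}. t \<le> f i}" using M i by (auto intro: order_trans)
  qed (auto simp: M_def)
  then show ?thesis by simp
qed simp

lemma le_card_superlevel_iff:
  fixes f :: "nat \<Rightarrow> 'a::order"
  assumes "antimono_on {1..k} f" and "j \<in> {1..k}"
  shows "j \<le> card {i \<in> {1..k}. t \<le> f i} \<longleftrightarrow> t \<le> f j"
  using antimono_on_superlevel_eq[OF assms(1), of t] assms(2) by (metis (mono_tags) atLeastAtMost_iff mem_Collect_eq)

text \<open>Conjugation of partitions in a k \<times> m box: f has m parts (at 1..m), each at most k.\<close>

definition conjugate :: "nat \<Rightarrow> nat \<Rightarrow> (nat \<Rightarrow> nat) \<Rightarrow> nat \<Rightarrow> nat" where
  "conjugate k m f i = (if i \<in> {1..k} then card {x \<in> {1..m}. i \<le> f x} else 0)"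

lemma conjugate_outside: "i \<notin> {1..k} \<Longrightarrow> conjugate k m f i = 0"
  unfolding conjugate_def by (rule if_not_P)

lemma conjugate_le: "conjugate k m f i \<le> m"
proof -
  have "card {x \<in> {1..m}. i \<le> f x} \<le> card {1..m}" by (rule card_mono) auto
  then show ?thesis by (simp add: conjugate_def)
qed

lemma conjugate_mono:
  assumes "\<forall>x\<in>{1..m}. f x \<le> g x"
  shows "conjugate k m f i \<le> conjugate k m g i"
  unfolding conjugate_def using assms by (auto intro!: card_mono intro: order_trans)

lemma antimono_on_conjugate: "antimono_on {1..k} (conjugate k m f)"
  unfolding conjugate_def monotone_on_def by (auto intro!: card_mono)

lemma conjugate_conjugate_apply:
  assumes f: "antimono_on {1..m} f" and bound: "\<forall>x\<in>{1..m}. f x \<le> k" and x: "x \<in> {1..m}"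
  shows "conjugate m k (conjugate k m f) x = f x"
proof -
  have "{i \<in> {1..k}. x \<le> conjugate k m f i} = {i \<in> {1..k}. i \<le> f x}"
    using le_card_superlevel_iff[OF f x] by (auto simp: conjugate_def)
  also have "\<dots> = {1..f x}" using bound x by (auto intro: order_trans)
  finally show ?thesis using x by (simp add: conjugate_def)
qed

lemma conjugate_conjugate:
  assumes "antimono_on {1..m} f" and "\<forall>x\<in>{1..m}. f x \<le> k" and "\<forall>x. x \<notin> {1..m} \<longrightarrow> f x = 0"
  shows "conjugate m k (conjugate k m f) = f"
proof
  fix x
  show "conjugate m k (conjugate k m f) x = f x"
    using conjugate_conjugate_apply[OF assms(1,2)] assms(3)
    by (cases "x \<in> {1..m}") (simp_all add: conjugate_outside)
qed

section \<open>Catalan paths and their weight\<close>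

lemma is_cpath_iff:
  "is_cpath k lam C \<longleftrightarrow>
     (\<forall>i. i \<notin> {1..k} \<longrightarrow> C i = 0) \<and> antimono_on {1..k} C \<and> (\<forall>i\<in>{1..k}. C i \<le> lam i)"
proof -
  have "i \<notin> {1..k} \<longleftrightarrow> i < 1 \<or> k < i" for i :: nat by auto
  then show ?thesis unfolding is_cpath_def monotone_on_def by auto
qed

lemma card_column_rows_eq_conjugate:
  "x \<in> {1..m} \<Longrightarrow> card (column_rows {1..k} lam x) = conjugate m k lam x"
  by (simp add: column_rows_def conjugate_def)

lemma profile_le_conjugate:
  "E \<in> profiles {1..k} lam m \<Longrightarrow> x \<in> {1..m} \<Longrightarrow> E x \<le> conjugate m k lam x"
  by (simp add: profiles_def flip: card_column_rows_eq_conjugate)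

lemma conjugate_conjugate_profile:
  assumes E: "E \<in> profiles {1..k} lam m"
  shows "conjugate m k (conjugate k m E) = E"
proof (rule conjugate_conjugate)
  show "\<forall>x\<in>{1..m}. E x \<le> k" using profile_le_conjugate[OF E] conjugate_le order_trans by blast
qed (use E in \<open>simp_all add: profiles_def\<close>)

lemma is_cpath_conjugate_profile:
  assumes lam: "antimono_on {1..k} lam" and lam_le: "\<forall>i\<in>{1..k}. lam i \<le> m"
    and E: "E \<in> profiles {1..k} lam m"
  shows "is_cpath k lam (conjugate k m E)"
proof -
  have "conjugate k m E i \<le> lam i" if "i \<in> {1..k}" for i
    using conjugate_mono[of m E "conjugate m k lam" k i] profile_le_conjugate[OF E]
      conjugate_conjugate_apply[OF lam lam_le that] by simp
  then show ?thesis
    unfolding is_cpath_iff using antimono_on_conjugate conjugate_outside by blast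
qed

lemma bij_betw_conjugate_profiles:
  assumes lam: "antimono_on {1..k} lam" and lam_le: "\<forall>i\<in>{1..k}. lam i \<le> m"
  shows "bij_betw (conjugate k m) (profiles {1..k} lam m) {C. is_cpath k lam C}"
proof (rule bij_betw_byWitness[where f' = "conjugate m k"])
  show "\<forall>E\<in>profiles {1..k} lam m. conjugate m k (conjugate k m E) = E"
    using conjugate_conjugate_profile by blast
  show "\<forall>C\<in>{C. is_cpath k lam C}. conjugate k m (conjugate m k C) = C"
  proof
    fix C assume "C \<in> {C. is_cpath k lam C}"
    then have "antimono_on {1..k} C" "\<forall>i\<in>{1..k}. C i \<le> m" "\<forall>i. i \<notin> {1..k} \<longrightarrow> C i = 0"
      using lam_le by (auto simp: is_cpath_iff intro: order_trans)
    then show "conjugate k m (conjugate m k C) = C" by (rule conjugate_conjugate)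
  qed
  show "conjugate k m ` profiles {1..k} lam m \<subseteq> {C. is_cpath k lam C}"
    using is_cpath_conjugate_profile[OF lam lam_le] by blast
  show "conjugate m k ` {C. is_cpath k lam C} \<subseteq> profiles {1..k} lam m"
  proof clarify
    fix C assume "is_cpath k lam C"
    then have "conjugate m k C x \<le> conjugate m k lam x" for x
      by (intro conjugate_mono) (simp add: is_cpath_iff)
    then show "conjugate m k C \<in> profiles {1..k} lam m"
      unfolding profiles_def
      using antimono_on_conjugate conjugate_outside card_column_rows_eq_conjugate by auto
  qed
qed

lemma path_beta_conjugate:
  assumes E: "E \<in> profiles {1..k} lam m"
  shows "path_beta k (conjugate k m E) = E 1"
proof -
  have E_anti: "antimono_on {1..m} E" using E by (simp add: profiles_def)
  have pos_iff: "0 < conjugate k m E i \<longleftrightarrow> i \<le> E 1" if i: "i \<in> {1..k}" for i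
  proof (cases "1 \<in> {1..m}")
    case True
    then show ?thesis
      using le_card_superlevel_iff[OF E_anti True, of i] i by (simp add: conjugate_def Suc_le_eq)
  next
    case False
    then show ?thesis using E i by (simp add: conjugate_def profiles_def)
  qed
  have "E 1 \<le> k"
    using profile_le_conjugate[OF E, of 1] conjugate_le[of m k lam 1] E
    by (cases "1 \<in> {1..m}") (simp_all add: profiles_def)
  then have "{i. 1 \<le> i \<and> i \<le> k \<and> 0 < conjugate k m E i} = {1..E 1}"
    using pos_iff by auto
  then show ?thesis by (simp add: path_beta_def)
qed

lemma ext_le: "\<forall>j\<in>{1..k}. f j \<le> m \<Longrightarrow> ext k m f i \<le> m"
  by (simp add: ext_def)

text \<open>The path with south steps at C has its west step in column x at height k - i exactly for
  i = conjugate m k C x.\<close>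

lemma ext_step_iff:
  assumes f: "antimono_on {1..k} f" and f_le: "\<forall>j\<in>{1..k}. f j \<le> m"
    and x: "x \<in> {1..m}" and i: "i \<le> k"
  shows "ext k m f (Suc i) < x \<and> x \<le> ext k m f i \<longleftrightarrow> i = conjugate m k f x"
proof -
  let ?N = "conjugate m k f x"
  have N: "?N = card {j \<in> {1..k}. x \<le> f j}" using x by (simp add: conjugate_def)
  have "?N \<le> k" by (rule conjugate_le)
  have below_iff: "x \<le> ext k m f j \<longleftrightarrow> j \<le> ?N" if "j \<le> Suc k" for j
    using le_card_superlevel_iff[OF f, of j x] x that \<open>?N \<le> k\<close> N
    by (cases "j = 0 \<or> j = Suc k") (auto simp: ext_def)
  show ?thesis using below_iff[of i] below_iff[of "Suc i"] i by auto
qed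

lemma path_alpha_conjugate:
  assumes lam: "antimono_on {1..k} lam" and lam_le: "\<forall>i\<in>{1..k}. lam i \<le> m"
    and E: "E \<in> profiles {1..k} lam m"
  shows "path_alpha k m lam (conjugate k m E) =
           card {x \<in> {1..m}. E x < card (column_rows {1..k} lam x)}"
proof -
  let ?C = "conjugate k m E"
  have C_le: "\<forall>i\<in>{1..k}. ?C i \<le> m" using conjugate_le by blast
  have E_eq: "conjugate m k ?C = E" by (rule conjugate_conjugate_profile[OF E])
  have col: "card (column_rows {1..k} lam x) = conjugate m k lam x" if "x \<in> {1..m}" for x
    using card_column_rows_eq_conjugate[OF that] .
  have "{(i, x) \<in> west_steps k m ?C. \<not> (ext k m lam (Suc i) < x \<and> x \<le> ext k m lam i)} =
      (\<lambda>x. (E x, x)) ` {x \<in> {1..m}. E x < card (column_rows {1..k} lam x)}"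
  proof (intro equalityI subsetI; clarify)
    fix i x assume step: "(i, x) \<in> west_steps k m ?C"
      and off_L: "\<not> (ext k m lam (Suc i) < x \<and> x \<le> ext k m lam i)"
    have i: "i \<le> k" and x: "x \<in> {1..m}"
      using step order_trans[OF _ ext_le[OF C_le]] by (auto simp: west_steps_def)
    have "i = E x"
      using ext_step_iff[OF antimono_on_conjugate C_le x i] step E_eq by (simp add: west_steps_def)
    moreover have "i \<noteq> card (column_rows {1..k} lam x)"
      using ext_step_iff[OF lam lam_le x i] off_L col[OF x] by simp
    moreover have "E x \<le> card (column_rows {1..k} lam x)"
      using profile_le_conjugate[OF E x] col[OF x] by simp
    ultimately show "(i, x) \<in> (\<lambda>x. (E x, x)) ` {x \<in> {1..m}. E x < card (column_rows {1..k} lam x)}"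
      using x by auto
  next
    fix x assume x: "x \<in> {1..m}" and less: "E x < card (column_rows {1..k} lam x)"
    have "E x \<le> k" using less col[OF x] conjugate_le[of m k lam x] by simp
    then show "(E x, x) \<in> west_steps k m ?C \<and> \<not> (ext k m lam (Suc (E x)) < x \<and> x \<le> ext k m lam (E x))"
      using x less ext_step_iff[OF antimono_on_conjugate C_le x] ext_step_iff[OF lam lam_le x] col E_eq
      by (simp add: west_steps_def)
  qed
  moreover have "inj_on (\<lambda>x. (E x, x)) A" for A by (simp add: inj_on_def)
  ultimately show ?thesis by (simp add: path_alpha_def card_image)
qed

lemma is_cct_outside: "is_cct k lam T \<Longrightarrow> p \<notin> boxes k lam \<Longrightarrow> T p = Empty"
  unfolding is_cct_def by blast

lemma num_alpha_eq_card_alphas: "is_cct k lam T \<Longrightarrow> num_alpha k lam T = card (alphas T)"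
  unfolding num_alpha_def alphas_def using is_cct_outside by (metis cell.distinct(3))

lemma num_beta_eq_beta_profile:
  assumes lam_le: "\<forall>r\<in>{1..k}. lam r \<le> m" and T: "is_cct k lam T"
  shows "num_beta k lam T = beta_profile m T 1"
proof -
  have in_boxes: "p \<in> boxes k lam" if "T p = Beta" for p
    using is_cct_outside[OF T, of p] that by auto
  then have betas: "{p \<in> boxes k lam. T p = Beta} = betas_from T 1"
    by (auto simp: boxes_def betas_from_def)
  show ?thesis
  proof (cases "m = 0")
    case True
    then have "boxes k lam = {}" using lam_le by (force simp: boxes_def)
    then show ?thesis using True betas by (simp add: num_beta_def beta_profile_def)
  qed (simp add: num_beta_def beta_profile_def betas)
qed

lemma is_partitionD:
  assumes "is_partition k m lam"
  shows is_partition_antimono: "antimono_on {1..k} lam"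
    and is_partition_le: "\<forall>i\<in>{1..k}. lam i \<le> m"
proof -
  show lam: "antimono_on {1..k} lam" using assms by (simp add: is_partition_def monotone_on_def)
  show "\<forall>i\<in>{1..k}. lam i \<le> m"
  proof
    fix i assume "i \<in> {1..k}"
    then have "lam i \<le> lam 1" using lam by (simp add: monotone_on_def)
    then show "lam i \<le> m" using assms by (simp add: is_partition_def)
  qed
qed

lemma bij_betw_conjugate_beta_profile:
  assumes "is_partition k m lam"
  shows "bij_betw (conjugate k m \<circ> beta_profile m) {T. is_cct k lam T} {C. is_cpath k lam C}"
proof -
  have "{T. is_cct k lam T} = {T. is_tableau {1..k} lam m T}"
    using is_cct_iff_is_tableau[OF is_partition_le[OF assms]] by blast
  then show ?thesis
    using bij_betw_trans[OF bij_betw_beta_profile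
        bij_betw_conjugate_profiles[OF is_partitionD[OF assms]]] by simp
qed

lemma symbol_product_eq_path_wt:
  assumes lam: "is_partition k m lam" and T: "is_cct k lam T"
  shows "symbol_product k lam T = path_wt k m lam (conjugate k m (beta_profile m T))"
proof -
  note lam' = is_partitionD[OF lam]
  have T': "is_tableau {1..k} lam m T" using T is_cct_iff_is_tableau[OF lam'(2)] by blast
  have E: "beta_profile m T \<in> profiles {1..k} lam m" by (rule beta_profile_in_profiles[OF _ T']) simp
  show ?thesis
    using num_alpha_eq_card_alphas[OF T] card_alphas_beta_profile[OF _ T'] path_alpha_conjugate[OF lam' E]
      num_beta_eq_beta_profile[OF lam'(2) T] path_beta_conjugate[OF E]
    by (simp add: symbol_product_def path_wt_def)
qed

theorem proposition3p1:
  fixes n k m :: nat and lam :: "nat \<Rightarrow> nat"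
  assumes "1 \<le> k" and "k \<le> n" and "m = n - k"
    and "is_partition k m lam"
  shows "\<exists>\<Phi>. bij_betw \<Phi> {T. is_cct k lam T} {C. is_cpath k lam C} \<and>
           (\<forall>T. is_cct k lam T \<longrightarrow>
              symbol_product k lam T = path_wt k m lam (\<Phi> T) \<and>
              tableau_wt n k lam T = (k + fst (path_wt k m lam (\<Phi> T)),
                                      (n - k) + snd (path_wt k m lam (\<Phi> T))))"
  using bij_betw_conjugate_beta_profile[OF assms(4)] symbol_product_eq_path_wt[OF assms(4)]
  by (intro exI[of _ "conjugate k m \<circ> beta_profile m"])
    (auto simp: tableau_wt_def symbol_product_def prod_eq_iff)

end
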